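(* Let $G\in\mathcal{T}$ be uncontractible. Then every interior vertex of $G$ has degree at least $6$.
   Context: A torus graph with a single hole is a graph $G$ determined by a triple $(T,D,i)$ as follows. $M$ is a finite simplicial complex triangulating the torus $S^1\times S^1$ whose $1$-skeleton $T$ is a simple graph. $D$ is a simplicial complex triangulating a closed disc. $i:D\to M$ is a simplicial map which is injective on $2$-simplexes and respects adjacency of $2$-simplexes. $G$ is the subgraph of $T$ obtained by deleting the edges that are images under $i$ of interior $1$-simplexes of $D$. Its facial $3$-cycles are the $3$-cycles of $T$ bounding $2$-simplexes of $M$ that are not images of $2$-simplexes of $D$. The boundary graph $\partial G=i(\partial D)$ consists of the edges not lying in two facial $3$-cycles. For a finite simple graph $H=(V,E)$ the freedom number is $f(H)=3|V|-|E|$. $H$ is $(3,6)$-tight if $f(H)=6$ and $f(K)\ge 6$ for every subgraph $K$ with at least $3$ vertices. $\mathcal{T}$ denotes the class of $(3,6)$-tight torus graphs with a single hole. An edge is of type $FF$ if it lies in two facial $3$-cycles. $G$ is uncontractible if every $FF$ edge lies on a non-facial $3$-cycle. An interior vertex is a vertex of $G$ not lying on $\partial G$. *)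

theory Defs
  imports "HOL-Analysis.Analysis"
begin

definition simplicial_complex :: "'v set set \<Rightarrow> bool" where
  "simplicial_complex K \<longleftrightarrow>
     finite K \<and> (\<forall>s\<in>K. finite s \<and> s \<noteq> {}) \<and>
     (\<forall>s\<in>K. \<forall>t. t \<subseteq> s \<and> t \<noteq> {} \<longrightarrow> t \<in> K)"

text \<open>Standard geometric realisation: barycentric coordinate functions whose support is a
  simplex; topologised as a subspace of the product space 'v => real.\<close>

definition realization :: "'v set set \<Rightarrow> ('v \<Rightarrow> real) set" where
  "realization K = {f. (\<forall>v. 0 \<le> f v) \<and> sum f (\<Union>K) = 1 \<and> {v. f v \<noteq> 0} \<in> K}"

definition torus_triangulation :: "'v set set \<Rightarrow> bool" where
  "torus_triangulation M \<longleftrightarrow> simplicial_complex M \<and>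
     realization M homeomorphic (sphere (0::complex) 1 \<times> sphere (0::complex) 1)"

definition disc_triangulation :: "'w set set \<Rightarrow> bool" where
  "disc_triangulation D \<longleftrightarrow> simplicial_complex D \<and>
     realization D homeomorphic cball (0::complex) 1"

definition simplices_of_dim :: "'v set set \<Rightarrow> nat \<Rightarrow> 'v set set" where
  "simplices_of_dim K n = {s\<in>K. card s = Suc n}"

abbreviation edges_of :: "'v set set \<Rightarrow> 'v set set" where
  "edges_of K \<equiv> simplices_of_dim K 1"

abbreviation triangles_of :: "'v set set \<Rightarrow> 'v set set" where
  "triangles_of K \<equiv> simplices_of_dim K 2"

text \<open>In a triangulated disc an edge is interior iff it lies in two triangles, and lies on the
  boundary iff it lies in exactly one triangle.\<close>

definition interior_edges :: "'w set set \<Rightarrow> 'w set set" where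
  "interior_edges D = {e\<in>edges_of D. card {t\<in>triangles_of D. e \<subseteq> t} = 2}"

definition boundary_edges :: "'w set set \<Rightarrow> 'w set set" where
  "boundary_edges D = {e\<in>edges_of D. card {t\<in>triangles_of D. e \<subseteq> t} = 1}"

definition simplicial_map :: "('w \<Rightarrow> 'v) \<Rightarrow> 'w set set \<Rightarrow> 'v set set \<Rightarrow> bool" where
  "simplicial_map i D M \<longleftrightarrow> (\<forall>s\<in>D. i ` s \<in> M)"

definition torus_hole_data :: "'v set set \<Rightarrow> 'w set set \<Rightarrow> ('w \<Rightarrow> 'v) \<Rightarrow> bool" where
  "torus_hole_data M D i \<longleftrightarrow>
     torus_triangulation M \<and> disc_triangulation D \<and> simplicial_map i D M \<and>
     \<comment> \<open>injective on 2-simplexes\<close>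
     (\<forall>t\<in>triangles_of D. inj_on i t) \<and> inj_on (image i) (triangles_of D) \<and>
     \<comment> \<open>respects adjacency of 2-simplexes\<close>
     (\<forall>s\<in>triangles_of D. \<forall>t\<in>triangles_of D.
        card (s \<inter> t) = 2 \<longrightarrow> card (i ` s \<inter> i ` t) = 2)"

definition thg_vertices :: "'v set set \<Rightarrow> 'v set" where
  "thg_vertices M = \<Union>M"

definition thg_edges :: "'v set set \<Rightarrow> 'w set set \<Rightarrow> ('w \<Rightarrow> 'v) \<Rightarrow> 'v set set" where
  "thg_edges M D i = edges_of M - (image i) ` interior_edges D"

definition facial_cycles :: "'v set set \<Rightarrow> 'w set set \<Rightarrow> ('w \<Rightarrow> 'v) \<Rightarrow> 'v set set" where
  "facial_cycles M D i = triangles_of M - (image i) ` triangles_of D"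

definition thg_boundary_edges :: "'v set set \<Rightarrow> 'w set set \<Rightarrow> ('w \<Rightarrow> 'v) \<Rightarrow> 'v set set" where
  "thg_boundary_edges M D i = (image i) ` boundary_edges D"

definition interior_vertices :: "'v set set \<Rightarrow> 'w set set \<Rightarrow> ('w \<Rightarrow> 'v) \<Rightarrow> 'v set" where
  "interior_vertices M D i = thg_vertices M - \<Union>(thg_boundary_edges M D i)"

definition freedom :: "'v set \<Rightarrow> 'v set set \<Rightarrow> int" where
  "freedom V E = 3 * int (card V) - int (card E)"

definition is_subgraph :: "'v set \<Rightarrow> 'v set set \<Rightarrow> 'v set \<Rightarrow> 'v set set \<Rightarrow> bool" where
  "is_subgraph W F V E \<longleftrightarrow> W \<subseteq> V \<and> F \<subseteq> E \<and> (\<forall>e\<in>F. e \<subseteq> W)"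

definition tight36 :: "'v set \<Rightarrow> 'v set set \<Rightarrow> bool" where
  "tight36 V E \<longleftrightarrow> freedom V E = 6 \<and>
     (\<forall>W F. is_subgraph W F V E \<and> card W \<ge> 3 \<longrightarrow> freedom W F \<ge> 6)"

definition degree :: "'v set set \<Rightarrow> 'v \<Rightarrow> nat" where
  "degree E v = card {e\<in>E. v \<in> e}"

definition three_cycle :: "'v set set \<Rightarrow> 'v set \<Rightarrow> bool" where
  "three_cycle E c \<longleftrightarrow> card c = 3 \<and> (\<forall>e. e \<subseteq> c \<and> card e = 2 \<longrightarrow> e \<in> E)"

definition FF_edge :: "'v set set \<Rightarrow> 'w set set \<Rightarrow> ('w \<Rightarrow> 'v) \<Rightarrow> 'v set \<Rightarrow> bool" where
  "FF_edge M D i e \<longleftrightarrow> e \<in> thg_edges M D i \<and>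
     card {c\<in>facial_cycles M D i. e \<subseteq> c} = 2"

definition uncontractible :: "'v set set \<Rightarrow> 'w set set \<Rightarrow> ('w \<Rightarrow> 'v) \<Rightarrow> bool" where
  "uncontractible M D i \<longleftrightarrow>
     (\<forall>e. FF_edge M D i e \<longrightarrow>
        (\<exists>c. three_cycle (thg_edges M D i) c \<and> e \<subseteq> c \<and> c \<notin> facial_cycles M D i))"

definition in_class_T :: "'v set set \<Rightarrow> 'w set set \<Rightarrow> ('w \<Rightarrow> 'v) \<Rightarrow> bool" where
  "in_class_T M D i \<longleftrightarrow> torus_hole_data M D i \<and> tight36 (thg_vertices M) (thg_edges M D i)"

end

theory Submission
  imports Defs
begin

text \<open>
  Invariance of domain shows that in a triangulated surface every edge lies in exactly two
  triangles and every vertex lies on an edge, while in a triangulated disc every edge lies in at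
  most two triangles. Consequently, at an interior vertex \<open>v\<close> of \<open>G\<close> both triangles of the torus
  through an edge \<open>vu\<close> are facial, so \<open>vu\<close> is of type FF and, by uncontractibility, also lies on
  a non-facial 3-cycle. Their third vertices are three distinct common neighbours of \<open>u\<close> and
  \<open>v\<close>, so the neighbourhood \<open>N\<close> of \<open>v\<close> spans at least \<open>3|N|/2\<close> edges. Tightness of the
  subgraph spanned by \<open>v\<close> and \<open>N\<close> bounds that number by \<open>2|N| - 3\<close>, whence \<open>|N| \<ge> 6\<close>;
  \<open>N\<close> is nonempty because an isolated vertex would violate tightness.
\<close>

section \<open>Invariance of domain for planar and locally planar spaces\<close>

definition locally_planar :: "'a::topological_space set \<Rightarrow> bool" where
  "locally_planar R \<longleftrightarrow>
     (\<forall>p\<in>R. \<exists>V W \<psi> \<psi>'. p \<in> V \<and> openin (top_of_set R) V \<and> open (W::complex set) \<and>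
        homeomorphism V W \<psi> \<psi>')"

definition planar_domain_invariant :: "'a::topological_space set \<Rightarrow> bool" where
  "planar_domain_invariant R \<longleftrightarrow>
     (\<forall>U g. open (U::complex set) \<and> continuous_on U g \<and> inj_on g U \<and> g ` U \<subseteq> R \<longrightarrow>
        openin (top_of_set R) (g ` U))"

lemma planar_domain_invariant_complex: "planar_domain_invariant (X::complex set)"
  unfolding planar_domain_invariant_def
  by (meson invariance_of_domain open_subset)

lemma homeomorphic_planar_domain_invariant:
  fixes R :: "'a::topological_space set" and X :: "'b::topological_space set"
  assumes "R homeomorphic X" "planar_domain_invariant X"
  shows "planar_domain_invariant R"
  unfolding planar_domain_invariant_def
proof (intro allI impI, elim conjE)
  fix U :: "complex set" and g
  assume U: "open U" and g: "continuous_on U g" "inj_on g U" "g ` U \<subseteq> R"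
  obtain h k where hk: "homeomorphism R X h k"
    using assms(1) unfolding homeomorphic_def by blast
  have kh: "k (h x) = x" if "x \<in> R" for x
    using homeomorphism_apply1[OF hk that] .
  have "continuous_on U (h \<circ> g)"
    using g by (meson continuous_on_compose continuous_on_subset homeomorphism_cont1[OF hk])
  moreover have "inj_on (h \<circ> g) U"
    using g(2) inj_on_subset[OF inj_on_inverseI[of R k h] g(3)] kh by (simp add: comp_inj_on)
  moreover have "(h \<circ> g) ` U \<subseteq> X"
    using g(3) homeomorphism_image1[OF hk] by auto
  ultimately have "openin (top_of_set X) ((h \<circ> g) ` U)"
    using assms(2) U unfolding planar_domain_invariant_def by blast
  hence "openin (top_of_set R) (k ` (h \<circ> g) ` U)"
    using homeomorphism_imp_open_map[OF homeomorphism_symD[OF hk]] by blast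
  moreover have "k ` (h \<circ> g) ` U = g ` U"
    using g(3) kh by (force simp: image_comp)
  ultimately show "openin (top_of_set R) (g ` U)" by simp
qed

lemma locally_planar_imp_planar_domain_invariant:
  assumes "locally_planar R"
  shows "planar_domain_invariant R"
  unfolding planar_domain_invariant_def
proof (intro allI impI, elim conjE)
  fix U :: "complex set" and g
  assume U: "open U" and g: "continuous_on U g" "inj_on g U" "g ` U \<subseteq> R"
  show "openin (top_of_set R) (g ` U)"
  proof (subst openin_subopen, intro ballI)
    fix y assume "y \<in> g ` U"
    then obtain u where u: "u \<in> U" "y = g u" by auto
    obtain V and W :: "complex set" and \<psi> \<psi>' where
      V: "g u \<in> V" "openin (top_of_set R) V" and hom: "homeomorphism V W \<psi> \<psi>'"
      using assms g(3) u(1) unfolding locally_planar_def by (meson image_subset_iff)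
    have "planar_domain_invariant V"
      using homeomorphic_planar_domain_invariant[OF _ planar_domain_invariant_complex] hom
      unfolding homeomorphic_def by blast
    define U' where "U' = U \<inter> g -` V"
    have "openin (top_of_set U) U'"
      unfolding U'_def using continuous_openin_preimage[OF g(1) _ V(2)] g(3) by blast
    hence "open U'" using U openin_open_trans by blast
    moreover have "continuous_on U' g" "inj_on g U'" "g ` U' \<subseteq> V"
      using g(1,2) unfolding U'_def by (auto intro: continuous_on_subset inj_on_subset)
    ultimately have "openin (top_of_set V) (g ` U')"
      using \<open>planar_domain_invariant V\<close> unfolding planar_domain_invariant_def by blast
    hence "openin (top_of_set R) (g ` U')" using V(2) openin_trans by blast
    moreover have "y \<in> g ` U'" "g ` U' \<subseteq> g ` U" using u V(1) unfolding U'_def by auto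
    ultimately show "\<exists>T. openin (top_of_set R) T \<and> y \<in> T \<and> T \<subseteq> g ` U" by blast
  qed
qed

lemma homeomorphic_locally_planar:
  fixes R :: "'a::topological_space set" and X :: "'b::topological_space set"
  assumes "R homeomorphic X" "locally_planar X"
  shows "locally_planar R"
  unfolding locally_planar_def
proof
  fix p assume p: "p \<in> R"
  obtain h k where hk: "homeomorphism R X h k"
    using assms(1) unfolding homeomorphic_def by blast
  obtain V and W :: "complex set" and \<psi> \<psi>' where
    V: "h p \<in> V" "openin (top_of_set X) V" and W: "open W" and hom: "homeomorphism V W \<psi> \<psi>'"
    using assms(2) homeomorphism_image1[OF hk] p unfolding locally_planar_def by blast
  have VX: "V \<subseteq> X" using V(2) openin_subset by fastforce
  have kV: "openin (top_of_set R) (k ` V)"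
    using homeomorphism_imp_open_map[OF homeomorphism_symD[OF hk] V(2)] .
  have "h ` k ` V = V"
    using homeomorphism_apply2[OF hk] VX by (force simp: image_comp)
  hence "homeomorphism (k ` V) V h k"
    using homeomorphism_of_subsets[OF hk openin_imp_subset[OF kV] VX] by blast
  hence "homeomorphism (k ` V) W (\<psi> \<circ> h) (k \<circ> \<psi>')" using homeomorphism_compose hom by blast
  moreover have "p \<in> k ` V" using homeomorphism_apply1[OF hk p] V(1) by (metis image_eqI)
  ultimately show "\<exists>V W \<psi> \<psi>'. p \<in> V \<and> openin (top_of_set R) V \<and> open (W::complex set) \<and>
      homeomorphism V W \<psi> \<psi>'"
    using kV W by blast
qed

text \<open>Multiplying by \<open>cnj z\<close> rotates \<open>z\<close> to \<open>1\<close>; on the open half circle around \<open>1\<close> the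
  imaginary part is a coordinate.\<close>

lemma circle_chart:
  fixes z :: complex
  assumes z: "cmod z = 1"
  shows "homeomorphism (sphere 0 1 \<inter> {w. 0 < Re (w * cnj z)}) {y. \<bar>y\<bar> < 1}
           (\<lambda>w. Im (w * cnj z)) (\<lambda>y. z * Complex (sqrt (1 - y\<^sup>2)) y)"
    (is "homeomorphism ?A ?I ?\<psi> ?\<psi>'")
proof -
  have zz: "z * cnj z = 1" using z complex_norm_square[of z] by simp
  have chart: "?\<psi>' (?\<psi> w) = w \<and> ?\<psi> w \<in> ?I" if "w \<in> ?A" for w
  proof -
    define u where "u = w * cnj z"
    have "cmod u = 1" "0 < Re u" using that z unfolding u_def by (auto simp: norm_mult)
    hence uu: "(Re u)\<^sup>2 + (Im u)\<^sup>2 = 1" "0 < Re u" using cmod_power2[of u] by auto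
    hence "sqrt (1 - (Im u)\<^sup>2) = Re u" by (intro real_sqrt_unique) auto
    hence "Complex (sqrt (1 - (Im u)\<^sup>2)) (Im u) = u" by (simp add: complex_eq_iff)
    hence "?\<psi>' (?\<psi> w) = w * (z * cnj z)" unfolding u_def by (simp add: ac_simps)
    moreover have "(Im u)\<^sup>2 < 1" using uu by (smt (verit) zero_less_power)
    ultimately show ?thesis using zz unfolding u_def by (simp add: abs_square_less_1)
  qed
  have inverse_chart: "?\<psi> (?\<psi>' y) = y \<and> ?\<psi>' y \<in> ?A" if "y \<in> ?I" for y
  proof -
    have y2: "y\<^sup>2 < 1" using that by (simp add: abs_square_less_1)
    have e: "?\<psi>' y * cnj z = Complex (sqrt (1 - y\<^sup>2)) y"
      using zz by (metis mult.commute mult.left_commute mult.right_neutral)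
    have "(cmod (Complex (sqrt (1 - y\<^sup>2)) y))\<^sup>2 = 1" unfolding cmod_power2 using y2 by simp
    hence "cmod (Complex (sqrt (1 - y\<^sup>2)) y) = 1"
      using norm_ge_zero[of "Complex (sqrt (1 - y\<^sup>2)) y"] by (simp add: power2_eq_1_iff)
    hence "cmod (?\<psi>' y) = 1" using z by (simp add: norm_mult)
    moreover have "?\<psi> (?\<psi>' y) = y" "0 < Re (?\<psi>' y * cnj z)" unfolding e using y2 by simp_all
    ultimately show ?thesis by simp
  qed
  show ?thesis
    by (rule homeomorphismI) (use chart inverse_chart in \<open>auto intro!: continuous_intros\<close>)
qed

lemma locally_planar_torus: "locally_planar (sphere (0::complex) 1 \<times> sphere (0::complex) 1)"
  unfolding locally_planar_def
proof
  let ?S = "sphere (0::complex) 1"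
  fix p assume "p \<in> ?S \<times> ?S"
  then obtain z1 z2 where p: "p = (z1, z2)" and z: "cmod z1 = 1" "cmod z2 = 1" by auto
  define A where "A z = ?S \<inter> {w. 0 < Re (w * cnj z)}" for z
  define \<psi> where "\<psi> z w = Im (w * cnj z)" for z w
  define \<psi>' where "\<psi>' z y = z * Complex (sqrt (1 - y\<^sup>2)) y" for z y
  have hom: "homeomorphism (A z) {y. \<bar>y\<bar> < 1} (\<psi> z) (\<psi>' z)" if "cmod z = 1" for z
    using circle_chart[OF that] unfolding A_def \<psi>_def \<psi>'_def .
  note h1 = hom[OF z(1)] and h2 = hom[OF z(2)]
  define W where "W = {x::complex. \<bar>Re x\<bar> < 1 \<and> \<bar>Im x\<bar> < 1}"
  have "homeomorphism (A z1 \<times> A z2) W (\<lambda>q. Complex (\<psi> z1 (fst q)) (\<psi> z2 (snd q)))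
          (\<lambda>x. (\<psi>' z1 (Re x), \<psi>' z2 (Im x)))"
  proof (rule homeomorphismI)
    show "continuous_on (A z1 \<times> A z2) (\<lambda>q. Complex (\<psi> z1 (fst q)) (\<psi> z2 (snd q)))"
      unfolding \<psi>_def by (intro continuous_intros)
    show "continuous_on W (\<lambda>x. (\<psi>' z1 (Re x), \<psi>' z2 (Im x)))"
      unfolding \<psi>'_def by (intro continuous_intros)
  qed (use homeomorphism_apply1[OF h1] homeomorphism_apply1[OF h2]
          homeomorphism_apply2[OF h1] homeomorphism_apply2[OF h2]
          homeomorphism_image1[OF h1] homeomorphism_image1[OF h2]
          homeomorphism_image2[OF h1] homeomorphism_image2[OF h2]
        in \<open>auto simp: W_def complex_eq_iff\<close>)
  moreover have "open W"
    unfolding W_def by (intro open_Collect_conj open_Collect_less continuous_intros)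
  moreover have "openin (top_of_set (?S \<times> ?S)) (A z1 \<times> A z2)"
  proof -
    have "A z1 \<times> A z2 = (?S \<times> ?S) \<inter> {q. 0 < Re (fst q * cnj z1) \<and> 0 < Re (snd q * cnj z2)}"
      unfolding A_def by auto
    thus ?thesis
      by (auto intro!: openin_open_Int open_Collect_conj open_Collect_less continuous_intros)
  qed
  moreover have "p \<in> A z1 \<times> A z2"
  proof -
    have "Re (z * cnj z) = 1" if "cmod z = 1" for z
      using that complex_norm_square[of z] by simp
    thus ?thesis using z unfolding p A_def by simp
  qed
  ultimately show "\<exists>V W \<psi> \<psi>'. p \<in> V \<and> openin (top_of_set (?S \<times> ?S)) V \<and> open (W::complex set) \<and>
      homeomorphism V W \<psi> \<psi>'"
    by metis
qed

lemma continuous_on_coordinate [continuous_intros]: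
  "continuous_on A (\<lambda>f::'a \<Rightarrow> 'b::topological_space. f a)"
  by (rule continuous_on_subset[OF continuous_on_product_coordinates]) simp

lemma locally_planar_interior_image:
  fixes \<phi> :: "'a::topological_space \<Rightarrow> complex"
  assumes R: "locally_planar R" and S: "openin (top_of_set R) S" "p \<in> S"
    and \<phi>: "continuous_on S \<phi>" "inj_on \<phi> S"
  shows "\<phi> p \<in> interior (\<phi> ` S)"
proof -
  have "p \<in> R" using S openin_imp_subset by fastforce
  then obtain V and W :: "complex set" and \<psi> \<psi>' where
    V: "p \<in> V" "openin (top_of_set R) V" and W: "open W" and hom: "homeomorphism V W \<psi> \<psi>'"
    using R unfolding locally_planar_def by meson
  define Q where "Q = V \<inter> S"
  have QV: "Q \<subseteq> V" and QS: "Q \<subseteq> S" unfolding Q_def by auto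
  have "openin (top_of_set V) Q"
    using openin_Int[OF V(2) S(1)] openin_subset_trans[OF _ QV] openin_imp_subset[OF V(2)]
    unfolding Q_def by blast
  hence "open (\<psi> ` Q)"
    using homeomorphism_imp_open_map[OF hom] W openin_open_trans by blast
  moreover have inverse_image: "\<psi>' ` \<psi> ` Q = Q"
    using homeomorphism_apply1[OF hom] QV by (force simp: image_comp)
  moreover have "continuous_on (\<psi> ` Q) (\<phi> \<circ> \<psi>')"
  proof (rule continuous_on_compose)
    show "continuous_on (\<psi> ` Q) \<psi>'"
      using homeomorphism_cont2[OF hom] homeomorphism_image1[OF hom] QV
      by (meson continuous_on_subset image_mono)
    show "continuous_on (\<psi>' ` \<psi> ` Q) \<phi>" using inverse_image QS \<phi>(1) continuous_on_subset by metis
  qed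
  moreover have "inj_on (\<phi> \<circ> \<psi>') (\<psi> ` Q)"
  proof (rule comp_inj_on)
    show "inj_on \<psi>' (\<psi> ` Q)"
      using inj_on_inverseI[of W \<psi> \<psi>'] homeomorphism_apply2[OF hom] homeomorphism_image1[OF hom] QV
      by (meson image_mono inj_on_subset)
    show "inj_on \<phi> (\<psi>' ` \<psi> ` Q)" using inverse_image QS \<phi>(2) inj_on_subset by metis
  qed
  ultimately have "open (\<phi> ` Q)" using invariance_of_domain by (metis image_comp)
  moreover have "\<phi> p \<in> \<phi> ` Q" using V(1) S(2) unfolding Q_def by blast
  ultimately show ?thesis using QS interior_maximal by (metis image_mono subsetD)
qed

section \<open>Edges and triangles of surface triangulations\<close>

lemma simplicial_complex_finite: "simplicial_complex K \<Longrightarrow> finite K"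
  unfolding simplicial_complex_def by blast

lemma simplicial_complex_finite_vertices: "simplicial_complex K \<Longrightarrow> finite (\<Union>K)"
  unfolding simplicial_complex_def by blast

lemma simplicial_complex_face:
  "simplicial_complex K \<Longrightarrow> s \<in> K \<Longrightarrow> t \<subseteq> s \<Longrightarrow> t \<noteq> {} \<Longrightarrow> t \<in> K"
  unfolding simplicial_complex_def by blast

lemma triangles_of_iff: "t \<in> triangles_of K \<longleftrightarrow> t \<in> K \<and> card t = 3"
  by (simp add: simplices_of_dim_def)

lemma edges_of_iff: "e \<in> edges_of K \<longleftrightarrow> e \<in> K \<and> card e = 2"
  by (simp add: simplices_of_dim_def numeral_2_eq_2)

lemma mem_realization_iff:
  assumes "simplicial_complex K" "{w. f w \<noteq> 0} \<subseteq> S" "S \<subseteq> \<Union>K"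
  shows "f \<in> realization K \<longleftrightarrow> (\<forall>w. 0 \<le> f w) \<and> {w. f w \<noteq> 0} \<in> K \<and> sum f S = 1"
proof -
  have "sum f (\<Union>K) = sum f S"
    using assms by (intro sum.mono_neutral_right simplicial_complex_finite_vertices) auto
  thus ?thesis unfolding realization_def by auto
qed

lemma realization_vertex_pair_le_1:
  assumes K: "simplicial_complex K" and f: "f \<in> realization K" and "a \<noteq> b"
  shows "f a + f b \<le> 1"
proof -
  define S where "S = {w. f w \<noteq> 0}"
  have nonneg: "\<And>w. 0 \<le> f w" and S: "S \<in> K" using f unfolding realization_def S_def by auto
  hence fin: "finite S" using K unfolding simplicial_complex_def by blast
  have "f a + f b = sum f {a, b}" using \<open>a \<noteq> b\<close> by simp
  also have "\<dots> = sum f ({a, b} \<inter> S)" by (rule sum.mono_neutral_right) (auto simp: S_def)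
  also have "\<dots> \<le> sum f S" using fin nonneg by (intro sum_mono2) auto
  also have "\<dots> = 1" using f mem_realization_iff[OF K, of f S] S unfolding S_def by blast
  finally show ?thesis .
qed

text \<open>An isolated vertex would be an isolated point of a locally planar space.\<close>

lemma locally_planar_vertex_in_edge:
  assumes K: "simplicial_complex K" and L: "locally_planar (realization K)" and v: "v \<in> \<Union>K"
  obtains u where "u \<noteq> v" "{v, u} \<in> K"
proof (rule ccontr)
  assume no_edge: "\<not> thesis"
  define \<delta> where "\<delta> w = (if w = v then 1 else 0 :: real)" for w
  define S where "S = {f \<in> realization K. 0 < f v}"
  have vK: "{v} \<in> K" using v simplicial_complex_face[OF K] by blast
  have \<delta>: "\<delta> \<in> realization K"
    using mem_realization_iff[OF K, of \<delta> "{v}"] v vK by (auto simp: \<delta>_def)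
  have "S = {\<delta>}"
  proof (intro equalityI subsetI)
    fix f assume f: "f \<in> S"
    have "{v, w} \<in> K" if "f w \<noteq> 0" for w
      using simplicial_complex_face[OF K, of "{w. f w \<noteq> 0}" "{v, w}"] f that
      unfolding S_def realization_def by auto
    hence supp: "{w. f w \<noteq> 0} \<subseteq> {v}" using no_edge that by blast
    hence "f v = 1" using f mem_realization_iff[OF K supp] v unfolding S_def by simp
    thus "f \<in> {\<delta>}" using supp by (auto simp: \<delta>_def fun_eq_iff)
  qed (use \<delta> in \<open>simp add: S_def \<delta>_def\<close>)
  moreover have "openin (top_of_set (realization K)) S"
    unfolding S_def Collect_conj_eq Collect_mem_eq
    by (intro openin_open_Int open_Collect_less continuous_intros)
  ultimately have "(0::complex) \<in> interior ((\<lambda>_. 0) ` S)"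
    using locally_planar_interior_image[OF L, of S \<delta> "\<lambda>_. 0"] by simp
  thus False using \<open>S = {\<delta>}\<close> by simp
qed

text \<open>If at most one triangle contains the edge \<open>ab\<close>, a point of the open star of \<open>ab\<close> can
  give positive weight only to \<open>a\<close>, \<open>b\<close> and the third vertex of that triangle, so it is
  determined by its weights at \<open>a\<close> and \<open>b\<close>.\<close>

lemma edge_star_injective:
  assumes K: "simplicial_complex K" and ab: "a \<noteq> b"
    and at_most_one: "card {t \<in> triangles_of K. {a, b} \<subseteq> t} \<le> 1"
  shows "inj_on (\<lambda>f. (f a, f b)) {f \<in> realization K. 0 < f a \<and> 0 < f b}"
    (is "inj_on _ ?S")
proof (rule inj_onI)
  have finite_T: "finite {t \<in> triangles_of K. {a, b} \<subseteq> t}"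
    using simplicial_complex_finite[OF K] by (simp add: triangles_of_iff)
  have triangle: "{a, b, w} \<in> triangles_of K" if "h \<in> ?S" "w \<notin> {a, b}" "h w \<noteq> 0" for h w
  proof -
    have "{a, b, w} \<in> K"
      using that simplicial_complex_face[OF K, of "{w. h w \<noteq> 0}" "{a, b, w}"]
      unfolding realization_def by auto
    thus ?thesis using that(2) ab by (auto simp: triangles_of_iff card_insert_if)
  qed
  have unique: "t = t'"
    if "t \<in> triangles_of K" "{a, b} \<subseteq> t" "t' \<in> triangles_of K" "{a, b} \<subseteq> t'" for t t'
    using at_most_one card_le_Suc0_iff_eq[OF finite_T] that by (simp add: One_nat_def)
  have support: "{w'. h w' \<noteq> 0} \<subseteq> {a, b, w}"
    if "h \<in> ?S" "{a, b, w} \<in> triangles_of K" for h w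
  proof
    fix w' assume "w' \<in> {w'. h w' \<noteq> 0}"
    hence "w' \<in> {a, b} \<or> {a, b, w'} = {a, b, w}"
      using triangle[OF that(1)] unique[OF _ _ that(2)] by blast
    thus "w' \<in> {a, b, w}" by blast
  qed
  fix f g assume f: "f \<in> ?S" and g: "g \<in> ?S" and eq: "(f a, f b) = (g a, g b)"
  have third: "h w = 1 - h a - h b"
    if "h \<in> ?S" "{a, b, w} \<in> triangles_of K" "w \<notin> {a, b}" for h w
  proof -
    have "{a, b, w} \<subseteq> \<Union>K" using that(2) unfolding triangles_of_iff by blast
    hence "sum h {a, b, w} = 1"
      using that(1) mem_realization_iff[OF K support[OF that(1,2)]] by blast
    thus ?thesis using that(3) ab by (auto simp: sum.insert_if)
  qed
  show "f = g"
  proof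
    fix w
    show "f w = g w"
    proof (cases "w \<in> {a, b} \<or> (f w = 0 \<and> g w = 0)")
      case True thus ?thesis using eq by auto
    next
      case False
      hence "{a, b, w} \<in> triangles_of K" "w \<notin> {a, b}" using triangle f g by blast+
      thus ?thesis using third[OF f] third[OF g] eq by simp
    qed
  qed
qed

text \<open>Otherwise the open star of the edge embeds into the closed upper half-plane, with the
  midpoint of the edge going to \<open>0\<close>.\<close>

lemma locally_planar_edge_in_two_triangles:
  assumes K: "simplicial_complex K" and L: "locally_planar (realization K)"
    and e: "e \<in> edges_of K"
  shows "2 \<le> card {t \<in> triangles_of K. e \<subseteq> t}"
proof (rule ccontr)
  have eK: "e \<in> K" and "card e = 2" using e edges_of_iff by blast+
  then obtain a b where ab: "e = {a, b}" "a \<noteq> b" by (meson card_2_iff)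
  assume "\<not> 2 \<le> card {t \<in> triangles_of K. e \<subseteq> t}"
  hence inj: "inj_on (\<lambda>f. (f a, f b)) {f \<in> realization K. 0 < f a \<and> 0 < f b}"
    using edge_star_injective[OF K ab(2)] ab(1) by simp
  define S where "S = {f \<in> realization K. 0 < f a \<and> 0 < f b}"
  define \<phi> where "\<phi> f = Complex (f a - f b) (1 - f a - f b)" for f :: "'a \<Rightarrow> real"
  define m where "m w = (if w \<in> {a, b} then 1/2 else 0 :: real)" for w
  have "{w. m w \<noteq> 0} = e" using ab by (auto simp: m_def)
  hence "m \<in> realization K \<longleftrightarrow> (\<forall>w. 0 \<le> m w) \<and> e \<in> K \<and> sum m e = 1"
    using mem_realization_iff[OF K, of m e] eK by auto
  hence "m \<in> realization K" using eK ab by (simp add: m_def)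
  have "openin (top_of_set (realization K)) S"
    unfolding S_def Collect_conj_eq Collect_mem_eq
    by (intro openin_open_Int open_Int open_Collect_less continuous_intros)
  moreover have "m \<in> S" using \<open>m \<in> realization K\<close> by (simp add: S_def m_def)
  moreover have "continuous_on S \<phi>" unfolding \<phi>_def by (intro continuous_intros)
  moreover have "inj_on \<phi> S"
    using inj unfolding S_def \<phi>_def inj_on_def by (simp add: complex_eq_iff)
  ultimately have "\<phi> m \<in> interior (\<phi> ` S)" by (rule locally_planar_interior_image[OF L])
  moreover have "\<phi> m = 0" using ab(2) by (simp add: \<phi>_def m_def complex_eq_iff)
  ultimately obtain \<epsilon> where \<epsilon>: "\<epsilon> > 0" "ball 0 \<epsilon> \<subseteq> \<phi> ` S" by (metis mem_interior)
  have "Complex 0 (- \<epsilon> / 2) \<in> ball 0 \<epsilon>" using \<epsilon>(1) by (simp add: cmod_def)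
  hence "Complex 0 (- \<epsilon> / 2) \<in> \<phi> ` S" by (rule subsetD[OF \<epsilon>(2)])
  then obtain f where f: "f \<in> S" "\<phi> f = Complex 0 (- \<epsilon> / 2)" by (auto simp only: image_iff)
  hence "1 < f a + f b" using \<open>\<epsilon> > 0\<close> by (simp add: \<phi>_def complex_eq_iff)
  moreover have "f a + f b \<le> 1"
    using realization_vertex_pair_le_1[OF K _ ab(2)] f(1) unfolding S_def by blast
  ultimately show False by simp
qed

lemma card_3_obtain_third:
  assumes "card t = 3" "a \<in> t" "b \<in> t" "a \<noteq> b"
  obtains c where "c \<notin> {a, b}" "t = {a, b, c}"
proof -
  have "card (t - {a, b}) = 1" using assms by (simp add: card_Diff_subset)
  then obtain c where c: "t - {a, b} = {c}" by (rule card_1_singletonE)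
  thus ?thesis using that assms by blast
qed

text \<open>The open square \<open>\<bar>Re z\<bar> + \<bar>Im z\<bar> < 1\<close> is mapped onto the open star of \<open>ab\<close> in the
  union of the two triangles: the upper half into \<open>{a, b, c1}\<close>, the lower half into \<open>{a, b, c2}\<close>.\<close>

lemma two_triangles_planar_embedding:
  assumes K: "simplicial_complex K" and t: "{a, b, c1} \<in> K" "{a, b, c2} \<in> K"
    and distinct: "distinct [a, b, c1, c2]"
  obtains U :: "complex set" and g
  where "open U" "0 \<in> U" "continuous_on U g" "inj_on g U" "g ` U \<subseteq> realization K"
    "g 0 = (\<lambda>w. if w \<in> {a, b} then 1/2 else 0)" "\<And>z w. w \<notin> {a, b, c1, c2} \<Longrightarrow> g z w = 0"
proof -
  define g where "g z w =
    (if w = a then (1 - \<bar>Im z\<bar> + Re z) / 2 else if w = b then (1 - \<bar>Im z\<bar> - Re z) / 2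
     else if w = c1 then max (Im z) 0 else if w = c2 then max (- Im z) 0 else 0)" for z w
  define U where "U = {z. \<bar>Re z\<bar> + \<bar>Im z\<bar> < 1}"
  have "open U" unfolding U_def by (intro open_Collect_less continuous_intros)
  moreover have "0 \<in> U" unfolding U_def by simp
  moreover have "continuous_on U g"
  proof (rule continuous_on_coordinatewise_then_product)
    show "continuous_on U (\<lambda>z. g z w)" for w
      by (cases "w = a"; cases "w = b"; cases "w = c1"; cases "w = c2")
         (simp_all add: g_def continuous_intros)
  qed
  moreover have "inj_on g U"
  proof (rule inj_onI)
    fix z z' assume "g z = g z'"
    moreover have "Re x = g x a - g x b" "Im x = g x c1 - g x c2" for x
      using distinct by (auto simp: g_def max_def field_simps)
    ultimately show "z = z'" by (metis complex_eqI)
  qed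
  moreover have "g ` U \<subseteq> realization K"
  proof (clarify)
    fix z assume "z \<in> U"
    hence z: "\<bar>Re z\<bar> + \<bar>Im z\<bar> < 1" by (simp add: U_def)
    have support: "{w. g z w \<noteq> 0} =
        (if Im z > 0 then {a, b, c1} else if Im z < 0 then {a, b, c2} else {a, b})"
      using z distinct by (auto simp: g_def max_def)
    hence "{w. g z w \<noteq> 0} \<in> K"
      using t simplicial_complex_face[OF K t(1), of "{a, b}"] by auto
    moreover have "sum (g z) {a, b, c1, c2} = g z a + g z b + g z c1 + g z c2"
      using distinct by (simp add: add.assoc)
    moreover have "\<dots> = 1" using distinct by (auto simp: g_def max_def field_simps)
    moreover have "0 \<le> g z w" for w using z by (auto simp: g_def)
    moreover have "{a, b, c1, c2} \<subseteq> \<Union>K" using t by blast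
    ultimately show "g z \<in> realization K"
      using mem_realization_iff[OF K, of "g z" "{a, b, c1, c2}"] support by auto
  qed
  moreover have "g 0 = (\<lambda>w. if w \<in> {a, b} then 1/2 else 0)" by (auto simp: g_def)
  moreover have "g z w = 0" if "w \<notin> {a, b, c1, c2}" for z w using that by (simp add: g_def)
  ultimately show thesis by (rule that)
qed

text \<open>A third triangle \<open>{a, b, c3}\<close> contains points arbitrarily close to the midpoint of the edge
  that are missed by the open image of the embedding of the first two.\<close>

lemma planar_domain_invariant_edge_in_at_most_two_triangles:
  assumes K: "simplicial_complex K" and I: "planar_domain_invariant (realization K)"
    and e: "e \<in> edges_of K"
  shows "card {t \<in> triangles_of K. e \<subseteq> t} \<le> 2"
proof (rule ccontr)
  have "card e = 2" using e edges_of_iff by blast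
  then obtain a b where ab: "e = {a, b}" "a \<noteq> b" by (meson card_2_iff)
  assume "\<not> ?thesis"
  hence "3 \<le> card {t \<in> triangles_of K. e \<subseteq> t}" by simp
  then obtain T where T: "T \<subseteq> {t \<in> triangles_of K. e \<subseteq> t}" "card T = 3"
    by (rule obtain_subset_with_card_n)
  then obtain t1 t2 t3 where t: "T = {t1, t2, t3}" "t1 \<noteq> t2" "t2 \<noteq> t3" "t1 \<noteq> t3"
    unfolding card_3_iff by blast
  have tri: "t \<in> K \<and> card t = 3 \<and> a \<in> t \<and> b \<in> t" if "t \<in> {t1, t2, t3}" for t
    using T(1) that ab(1) unfolding t(1) triangles_of_iff by blast
  obtain c1 c2 c3 where c: "c1 \<notin> {a, b}" "t1 = {a, b, c1}" "c2 \<notin> {a, b}" "t2 = {a, b, c2}"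
    "c3 \<notin> {a, b}" "t3 = {a, b, c3}"
    using card_3_obtain_third[OF _ _ _ ab(2)] tri by (metis insertCI)
  have distinct: "distinct [a, b, c1, c2]" "c3 \<notin> {a, b, c1, c2}" using c t ab(2) by auto
  have "{a, b, c1} \<in> K" "{a, b, c2} \<in> K" using tri c(2,4) by auto
  then obtain U :: "complex set" and g where
    g: "open U" "0 \<in> U" "continuous_on U g" "inj_on g U" "g ` U \<subseteq> realization K"
      "g 0 = (\<lambda>w. if w \<in> {a, b} then 1/2 else 0)" "\<And>z w. w \<notin> {a, b, c1, c2} \<Longrightarrow> g z w = 0"
    using two_triangles_planar_embedding[OF K _ _ distinct(1)] by blast
  have "openin (top_of_set (realization K)) (g ` U)"
    using I g(1,3-5) unfolding planar_domain_invariant_def by blast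
  then obtain G where G: "open G" "g ` U = realization K \<inter> G" by (auto simp: openin_open)
  define \<gamma> where "\<gamma> s w = (if w \<in> {a, b} then (1 - s) / 2 else if w = c3 then s else 0)"
    for s :: real and w
  have \<gamma>_cont: "continuous_on UNIV \<gamma>"
  proof (rule continuous_on_coordinatewise_then_product)
    show "continuous_on UNIV (\<lambda>s. \<gamma> s w)" for w
      by (cases "w \<in> {a, b}"; cases "w = c3") (simp_all add: \<gamma>_def continuous_intros)
  qed
  hence "open (\<gamma> -` G)" using continuous_on_open_vimage[of UNIV \<gamma>] G(1) by simp
  moreover have "\<gamma> 0 = g 0" by (simp add: g(6) \<gamma>_def fun_eq_iff)
  hence "0 \<in> \<gamma> -` G" using g(2) G(2) by blast
  ultimately obtain \<epsilon> where \<epsilon>: "\<epsilon> > 0" "ball 0 \<epsilon> \<subseteq> \<gamma> -` G" by (rule openE)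
  define s where "s = min (\<epsilon> / 2) (1 / 2)"
  have s: "0 < s" "s < 1" "\<gamma> s \<in> G" using \<epsilon> by (auto simp: s_def subset_iff)
  have "{w. \<gamma> s w \<noteq> 0} = t3" using s c ab(2) by (auto simp: \<gamma>_def)
  moreover have "t3 \<in> K" using tri by blast
  moreover have "sum (\<gamma> s) t3 = \<gamma> s a + \<gamma> s b + \<gamma> s c3"
    using c(5,6) ab(2) by (auto simp: add.assoc)
  moreover have "\<dots> = 1" using c(5) ab(2) by (simp add: \<gamma>_def)
  moreover have "0 \<le> \<gamma> s w" for w using s by (simp add: \<gamma>_def)
  ultimately have "\<gamma> s \<in> realization K" using mem_realization_iff[OF K, of "\<gamma> s" t3] by auto
  then obtain z where "\<gamma> s = g z" using s(3) G(2) by blast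
  hence "\<gamma> s c3 = 0" using g(7) distinct(2) by simp
  thus False using s(1) c(5) by (simp add: \<gamma>_def)
qed

section \<open>Neighbourhoods in (3,6)-tight graphs\<close>

definition neighbours :: "'v set set \<Rightarrow> 'v \<Rightarrow> 'v set" where
  "neighbours E v = {u. {v, u} \<in> E}"

lemma edge_containing_vertex:
  assumes "card e = 2" "v \<in> e"
  obtains u where "e = {v, u}" "u \<noteq> v"
  using assms by (metis card_2_iff doubleton_eq_iff insertE singletonD)

lemma degree_eq_card_neighbours:
  assumes "\<And>e. e \<in> E \<Longrightarrow> card e = 2"
  shows "degree E v = card (neighbours E v)"
proof -
  have "{e \<in> E. v \<in> e} = (\<lambda>u. {v, u}) ` neighbours E v"
    using assms by (auto simp: neighbours_def elim!: edge_containing_vertex)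
  moreover have "inj_on (\<lambda>u. {v, u}) (neighbours E v)"
    using assms by (fastforce simp: neighbours_def inj_on_def doubleton_eq_iff)
  ultimately show ?thesis unfolding degree_def by (simp add: card_image)
qed

lemma sum_degree_eq_twice_card_edges:
  assumes V: "finite V" and E: "\<And>e. e \<in> E \<Longrightarrow> card e = 2 \<and> e \<subseteq> V"
  shows "(\<Sum>v\<in>V. degree E v) = 2 * card E"
proof -
  have "finite E" using V E by (meson Pow_iff finite_Pow_iff finite_subset subsetI)
  have "(\<Sum>v\<in>V. degree E v) = (\<Sum>v\<in>V. \<Sum>e\<in>E. if v \<in> e then 1 else 0)"
    unfolding degree_def using \<open>finite E\<close> by (simp add: sum.If_cases Int_def)
  also have "\<dots> = (\<Sum>e\<in>E. \<Sum>v\<in>V. if v \<in> e then 1 else 0)" by (rule sum.swap)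
  also have "\<dots> = (\<Sum>e\<in>E. card e)"
  proof (rule sum.cong[OF refl])
    fix e assume "e \<in> E"
    hence "V \<inter> e = e" using E by blast
    thus "(\<Sum>v\<in>V. if v \<in> e then 1 else 0) = card e" using V by (simp add: sum.If_cases)
  qed
  also have "\<dots> = 2 * card E" using E by simp
  finally show ?thesis .
qed

lemma neighbours_not_self: "(\<And>e. e \<in> E \<Longrightarrow> card e = 2) \<Longrightarrow> v \<notin> neighbours E v"
  unfolding neighbours_def by fastforce

lemma card_induced_edges_ge_of_min_degree:
  assumes N: "finite N" and E: "\<And>e. e \<in> E \<Longrightarrow> card e = 2"
    and deg: "\<And>u. u \<in> N \<Longrightarrow> d \<le> card (neighbours E u \<inter> N)"
  shows "d * card N \<le> 2 * card {e \<in> E. e \<subseteq> N}"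
proof -
  define EN where "EN = {e \<in> E. e \<subseteq> N}"
  have "degree EN u = card (neighbours E u \<inter> N)" if "u \<in> N" for u
  proof -
    have "neighbours EN u = neighbours E u \<inter> N" using that unfolding EN_def neighbours_def by auto
    moreover have "card e = 2" if "e \<in> EN" for e using that E unfolding EN_def by blast
    ultimately show ?thesis using degree_eq_card_neighbours[of EN] by simp
  qed
  hence "(\<Sum>u\<in>N. d) \<le> (\<Sum>u\<in>N. degree EN u)" using deg by (intro sum_mono) simp
  also have "\<dots> = 2 * card EN"
    using E N by (intro sum_degree_eq_twice_card_edges) (auto simp: EN_def)
  finally show ?thesis unfolding EN_def by (simp add: mult.commute)
qed

lemma card_edges_within_closed_neighbourhood:
  assumes N: "finite (neighbours E v)" and E: "\<And>e. e \<in> E \<Longrightarrow> card e = 2"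
  defines "N \<equiv> neighbours E v"
  shows "card {e \<in> E. e \<subseteq> insert v N} = card {e \<in> E. e \<subseteq> N} + card N"
proof -
  have vN: "v \<notin> N" using neighbours_not_self[of E v] E unfolding N_def by blast
  have "{e \<in> E. e \<subseteq> insert v N} = {e \<in> E. e \<subseteq> N} \<union> (\<lambda>u. {v, u}) ` N"
    using E unfolding N_def neighbours_def by (auto elim!: edge_containing_vertex)
  moreover have "{e \<in> E. e \<subseteq> N} \<inter> (\<lambda>u. {v, u}) ` N = {}" using vN by auto
  moreover have "inj_on (\<lambda>u. {v, u}) N" using vN by (auto simp: inj_on_def doubleton_eq_iff)
  moreover have "finite {e \<in> E. e \<subseteq> N}"
    using N unfolding N_def by (auto intro: finite_subset[of _ "Pow _"])
  ultimately show ?thesis using N unfolding N_def by (simp add: card_Un_disjoint card_image)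
qed

lemma tight36_no_isolated_vertex:
  assumes V: "finite V" and E: "\<And>e. e \<in> E \<Longrightarrow> card e = 2 \<and> e \<subseteq> V"
    and tight: "tight36 V E" and v: "v \<in> V" and four: "4 \<le> card V"
  shows "neighbours E v \<noteq> {}"
proof
  assume no_neighbour: "neighbours E v = {}"
  have "v \<notin> e" if "e \<in> E" for e
    using E[OF that] no_neighbour that
    by (metis edge_containing_vertex empty_iff mem_Collect_eq neighbours_def)
  hence "is_subgraph (V - {v}) E V E" using E unfolding is_subgraph_def by blast
  moreover have "3 \<le> card (V - {v})" using four v V by simp
  ultimately have "6 \<le> freedom (V - {v}) E" using tight unfolding tight36_def by blast
  moreover have "freedom V E = 6" using tight unfolding tight36_def by blast
  ultimately show False using v V by (simp add: freedom_def card_Diff_singleton)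
qed

text \<open>With \<open>N\<close> the neighbours of \<open>v\<close> and \<open>e(N)\<close> the number of edges within \<open>N\<close>, counting gives
  \<open>3|N| \<le> 2 e(N)\<close>, and the freedom number of the subgraph spanned by \<open>v\<close> and \<open>N\<close> is
  \<open>3 + 2|N| - e(N) \<ge> 6\<close>.\<close>

lemma tight36_degree_ge_6_if_link_min_degree_3:
  assumes V: "finite V" and E: "\<And>e. e \<in> E \<Longrightarrow> card e = 2 \<and> e \<subseteq> V"
    and tight: "tight36 V E" and v: "v \<in> V" and nonempty: "neighbours E v \<noteq> {}"
    and link: "\<And>u. u \<in> neighbours E v \<Longrightarrow> 3 \<le> card (neighbours E u \<inter> neighbours E v)"
  shows "6 \<le> degree E v"
proof -
  have E2: "\<And>e. e \<in> E \<Longrightarrow> card e = 2" using E by blast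
  define N where "N = neighbours E v"
  have NV: "N \<subseteq> V" unfolding N_def neighbours_def by (auto dest: E)
  hence finN: "finite N" using V finite_subset by blast
  have link_edges: "3 * card N \<le> 2 * card {e \<in> E. e \<subseteq> N}"
    using card_induced_edges_ge_of_min_degree[OF finN E2] link unfolding N_def by blast
  obtain u where u: "u \<in> N" using nonempty unfolding N_def by blast
  have "neighbours E u \<inter> N \<subseteq> N - {u}" using neighbours_not_self[of E u] E2 by blast
  hence "card (neighbours E u \<inter> N) \<le> card N - 1"
    using finN u by (metis card_Diff_singleton card_mono finite_Diff)
  hence "4 \<le> card N" using link[of u] u unfolding N_def by linarith
  moreover have "v \<notin> N" using neighbours_not_self[of E v] E2 unfolding N_def by blast
  ultimately have "3 \<le> card (insert v N)" using finN by simp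
  moreover have "is_subgraph (insert v N) {e \<in> E. e \<subseteq> insert v N} V E"
    using v NV unfolding is_subgraph_def by blast
  ultimately have "6 \<le> freedom (insert v N) {e \<in> E. e \<subseteq> insert v N}"
    using tight unfolding tight36_def by blast
  hence "6 \<le> 3 * int (card N + 1) - int (card {e \<in> E. e \<subseteq> N} + card N)"
    using card_edges_within_closed_neighbourhood[OF _ E2] finN \<open>v \<notin> N\<close>
    unfolding freedom_def N_def by simp
  moreover have "degree E v = card N" unfolding N_def using E2 by (rule degree_eq_card_neighbours)
  ultimately show ?thesis using link_edges by simp
qed

section \<open>Torus graphs with a single hole\<close>

lemma torus_triangulation_simplicial_complex: "torus_triangulation M \<Longrightarrow> simplicial_complex M"
  unfolding torus_triangulation_def by blast

lemma torus_triangulation_locally_planar: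
  "torus_triangulation M \<Longrightarrow> locally_planar (realization M)"
  unfolding torus_triangulation_def by (metis homeomorphic_locally_planar locally_planar_torus)

lemma torus_edge_in_two_triangles:
  assumes "torus_triangulation M" "e \<in> edges_of M"
  shows "card {t \<in> triangles_of M. e \<subseteq> t} = 2"
proof -
  have K: "simplicial_complex M" using torus_triangulation_simplicial_complex[OF assms(1)] .
  have L: "locally_planar (realization M)" using torus_triangulation_locally_planar[OF assms(1)] .
  show ?thesis
    using locally_planar_edge_in_two_triangles[OF K L assms(2)]
      planar_domain_invariant_edge_in_at_most_two_triangles[OF K
        locally_planar_imp_planar_domain_invariant[OF L] assms(2)]
    by simp
qed

text \<open>The disc is not locally planar at its boundary, but it inherits invariance of domain from
  the plane.\<close>

lemma disc_edge_in_at_most_two_triangles: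
  assumes "disc_triangulation D" "e \<in> edges_of D"
  shows "card {t \<in> triangles_of D. e \<subseteq> t} \<le> 2"
proof -
  have K: "simplicial_complex D" and hom: "realization D homeomorphic cball (0::complex) 1"
    using assms(1) unfolding disc_triangulation_def by blast+
  have "planar_domain_invariant (realization D)"
    by (rule homeomorphic_planar_domain_invariant[OF hom planar_domain_invariant_complex])
  thus ?thesis by (rule planar_domain_invariant_edge_in_at_most_two_triangles[OF K _ assms(2)])
qed

lemma torus_four_vertices:
  assumes M: "torus_triangulation M" and v: "v \<in> \<Union>M"
  shows "4 \<le> card (\<Union>M)"
proof -
  have K: "simplicial_complex M" using torus_triangulation_simplicial_complex[OF M] .
  obtain u where "u \<noteq> v" "{v, u} \<in> M"
    using locally_planar_vertex_in_edge[OF K torus_triangulation_locally_planar[OF M] v] .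
  hence "{v, u} \<in> edges_of M" unfolding edges_of_iff by simp
  hence "card {t \<in> triangles_of M. {v, u} \<subseteq> t} = 2" by (rule torus_edge_in_two_triangles[OF M])
  then obtain t1 t2 where t: "t1 \<noteq> t2" "{t \<in> triangles_of M. {v, u} \<subseteq> t} = {t1, t2}"
    by (meson card_2_iff)
  hence t12: "t1 \<in> M" "t2 \<in> M" "card t1 = 3" "card t2 = 3"
    unfolding triangles_of_iff by blast+
  have fin: "finite (\<Union>M)" using simplicial_complex_finite_vertices[OF K] .
  have "finite t1" using t12(3) card.infinite by force
  hence "\<not> t2 \<subseteq> t1" using t12(3,4) t(1) card_subset_eq[of t1 t2] by auto
  hence "t1 \<subset> t1 \<union> t2" by blast
  hence "card t1 < card (t1 \<union> t2)"
    using fin t12(1,2) by (meson Sup_upper finite_subset le_supI psubset_card_mono)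
  moreover have "card (t1 \<union> t2) \<le> card (\<Union>M)" using fin t12(1,2) by (intro card_mono) auto
  ultimately show ?thesis using t12(3) by linarith
qed

lemma torus_triangulation_finite_vertices: "torus_triangulation M \<Longrightarrow> finite (thg_vertices M)"
  unfolding thg_vertices_def
  using simplicial_complex_finite_vertices torus_triangulation_simplicial_complex by blast

lemma thg_edge_is_edge:
  assumes "e \<in> thg_edges M D i"
  shows "card e = 2 \<and> e \<subseteq> thg_vertices M"
proof -
  have "e \<in> edges_of M" using assms unfolding thg_edges_def by blast
  thus ?thesis unfolding edges_of_iff thg_vertices_def by blast
qed

lemma torus_hole_dataD:
  assumes "torus_hole_data M D i"
  shows "torus_triangulation M" "disc_triangulation D" "simplicial_map i D M"
    "\<And>t. t \<in> triangles_of D \<Longrightarrow> inj_on i t" "inj_on (image i) (triangles_of D)"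
  using assms unfolding torus_hole_data_def by blast+

lemma hole_triangle_image:
  assumes H: "torus_hole_data M D i" and t: "t \<in> triangles_of D"
  shows "i ` t \<in> triangles_of M"
proof -
  have "inj_on i t" using torus_hole_dataD(4)[OF H t] .
  moreover have "i ` t \<in> M"
    using torus_hole_dataD(3)[OF H] t unfolding simplicial_map_def by (simp add: triangles_of_iff)
  ultimately show ?thesis using t by (simp add: card_image triangles_of_iff)
qed

lemma hole_triangle_through_interior_edge:
  assumes H: "torus_hole_data M D i" and e0: "e0 \<in> interior_edges D"
    and T: "T \<in> triangles_of M" "i ` e0 \<subseteq> T"
  shows "T \<in> image i ` triangles_of D"
proof -
  note torus = torus_hole_dataD(1)[OF H] and inj = torus_hole_dataD(5)[OF H]
    and inj_t = torus_hole_dataD(4)[OF H]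
  have "e0 \<in> edges_of D" "card {t \<in> triangles_of D. e0 \<subseteq> t} = 2"
    using e0 unfolding interior_edges_def by blast+
  then obtain t1 t2 where t: "t1 \<noteq> t2" "{t1, t2} = {t \<in> triangles_of D. e0 \<subseteq> t}"
    by (metis card_2_iff)
  hence t12: "t1 \<in> triangles_of D" "t2 \<in> triangles_of D" "e0 \<subseteq> t1" by blast+
  have K: "simplicial_complex M" using torus_triangulation_simplicial_complex[OF torus] .
  have images: "i ` t1 \<in> triangles_of M" "i ` t2 \<in> triangles_of M"
    using hole_triangle_image[OF H] t12 by blast+
  have sub: "i ` e0 \<subseteq> i ` t1" "i ` e0 \<subseteq> i ` t2" using t by blast+
  have "card (i ` e0) = 2"
    using \<open>e0 \<in> edges_of D\<close> inj_on_subset[OF inj_t[OF t12(1)] t12(3)]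
    unfolding edges_of_iff by (simp add: card_image)
  moreover have "i ` e0 \<in> M"
    using simplicial_complex_face[OF K _ sub(1)] images(1) calculation
    unfolding triangles_of_iff by force
  ultimately have "i ` e0 \<in> edges_of M" unfolding edges_of_iff by simp
  hence "card {i ` t1, i ` t2} = card {t \<in> triangles_of M. i ` e0 \<subseteq> t}"
    using torus_edge_in_two_triangles[OF torus] inj t(1) t12(1,2) by (simp add: inj_on_eq_iff)
  moreover have "finite {t \<in> triangles_of M. i ` e0 \<subseteq> t}"
    using simplicial_complex_finite[OF K] by (simp add: triangles_of_iff)
  moreover have "{i ` t1, i ` t2} \<subseteq> {t \<in> triangles_of M. i ` e0 \<subseteq> t}" using images sub by blast
  ultimately have "{i ` t1, i ` t2} = {t \<in> triangles_of M. i ` e0 \<subseteq> t}"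
    by (intro card_subset_eq)
  hence "T = i ` t1 \<or> T = i ` t2" using T by blast
  thus ?thesis using t12(1,2) by blast
qed

lemma facial_cycle_is_three_cycle:
  assumes H: "torus_hole_data M D i" and T: "T \<in> facial_cycles M D i"
  shows "three_cycle (thg_edges M D i) T"
  unfolding three_cycle_def
proof (intro conjI allI impI)
  have K: "simplicial_complex M"
    using torus_triangulation_simplicial_complex[OF torus_hole_dataD(1)[OF H]] .
  have TM: "T \<in> triangles_of M" "T \<notin> image i ` triangles_of D"
    using T unfolding facial_cycles_def by blast+
  show "card T = 3" using TM(1) triangles_of_iff by blast
  fix e assume e: "e \<subseteq> T \<and> card e = 2"
  hence "e \<in> M" using simplicial_complex_face[OF K, of T e] TM(1) triangles_of_iff by force
  hence "e \<in> edges_of M" using e edges_of_iff by blast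
  moreover have "e \<notin> image i ` interior_edges D"
    using hole_triangle_through_interior_edge[OF H _ TM(1)] TM(2) e by blast
  ultimately show "e \<in> thg_edges M D i" unfolding thg_edges_def by blast
qed

lemma triangle_at_interior_vertex_is_facial:
  assumes H: "torus_hole_data M D i" and v: "v \<in> interior_vertices M D i"
    and uv: "{v, u} \<in> thg_edges M D i" and T: "T \<in> triangles_of M" "{v, u} \<subseteq> T"
  shows "T \<in> facial_cycles M D i"
proof (rule ccontr)
  assume "T \<notin> facial_cycles M D i"
  then obtain t where t: "t \<in> triangles_of D" "T = i ` t"
    using T(1) unfolding facial_cycles_def by blast
  then obtain w a where wa: "w \<in> t" "a \<in> t" "i w = v" "i a = u" using T(2) by blast
  have "card {v, u} = 2" using uv edges_of_iff unfolding thg_edges_def by blast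
  hence "a \<noteq> w" using wa by auto
  have D: "disc_triangulation D" using torus_hole_dataD(2)[OF H] .
  hence K: "simplicial_complex D" unfolding disc_triangulation_def by blast
  have "{w, a} \<in> D"
    using simplicial_complex_face[OF K, of t "{w, a}"] t(1) wa triangles_of_iff by blast
  hence e0: "{w, a} \<in> edges_of D" using \<open>a \<noteq> w\<close> edges_of_iff by force
  have "finite {t \<in> triangles_of D. {w, a} \<subseteq> t}"
    using simplicial_complex_finite[OF K] by (simp add: triangles_of_iff)
  moreover have "t \<in> {t \<in> triangles_of D. {w, a} \<subseteq> t}" using t(1) wa by blast
  ultimately have "card {t \<in> triangles_of D. {w, a} \<subseteq> t} \<noteq> 0" by (metis card_0_eq empty_iff)
  hence "card {t \<in> triangles_of D. {w, a} \<subseteq> t} \<in> {1, 2}"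
    using disc_edge_in_at_most_two_triangles[OF D e0] by auto
  hence "{w, a} \<in> boundary_edges D \<or> {w, a} \<in> interior_edges D"
    using e0 unfolding boundary_edges_def interior_edges_def by blast
  moreover have "i ` {w, a} = {v, u}" using wa by simp
  ultimately consider "{v, u} \<in> thg_boundary_edges M D i" | "{v, u} \<in> image i ` interior_edges D"
    unfolding thg_boundary_edges_def by (metis rev_image_eqI)
  thus False
  proof cases
    case 1
    hence "v \<in> \<Union>(thg_boundary_edges M D i)" by blast
    thus False using v unfolding interior_vertices_def by blast
  next
    case 2
    thus False using uv unfolding thg_edges_def by blast
  qed
qed

lemma interior_vertex_edge_is_FF:
  assumes H: "torus_hole_data M D i" and v: "v \<in> interior_vertices M D i"
    and uv: "{v, u} \<in> thg_edges M D i"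
  shows "FF_edge M D i {v, u}"
proof -
  have "{c \<in> facial_cycles M D i. {v, u} \<subseteq> c} = {t \<in> triangles_of M. {v, u} \<subseteq> t}"
    using triangle_at_interior_vertex_is_facial[OF H v uv] by (auto simp: facial_cycles_def)
  moreover have "card {t \<in> triangles_of M. {v, u} \<subseteq> t} = 2"
    using torus_edge_in_two_triangles[OF torus_hole_dataD(1)[OF H]] uv
    unfolding thg_edges_def by blast
  ultimately show ?thesis using uv unfolding FF_edge_def by simp
qed

lemma three_cycle_through_edge:
  assumes T: "three_cycle E T" "{v, u} \<subseteq> T" and "u \<noteq> v"
  obtains x where "T = {v, u, x}" "x \<in> neighbours E u \<inter> neighbours E v"
proof -
  obtain x where x: "x \<notin> {v, u}" "T = {v, u, x}"
    using card_3_obtain_third[of T v u] T \<open>u \<noteq> v\<close> unfolding three_cycle_def by blast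
  hence "{u, x} \<in> E" "{v, x} \<in> E" using T(1) \<open>u \<noteq> v\<close> unfolding three_cycle_def by auto
  thus thesis using that x(2) unfolding neighbours_def by blast
qed

lemma uncontractible_link_min_degree_3:
  assumes H: "torus_hole_data M D i" and U: "uncontractible M D i"
    and v: "v \<in> interior_vertices M D i" and u: "u \<in> neighbours (thg_edges M D i) v"
  defines "E \<equiv> thg_edges M D i"
  shows "3 \<le> card (neighbours E u \<inter> neighbours E v)"
proof -
  note M = torus_hole_dataD(1)[OF H]
  have uv: "{v, u} \<in> thg_edges M D i" using u unfolding neighbours_def by blast
  hence "u \<noteq> v" using thg_edge_is_edge[of "{v, u}"] by fastforce
  have "FF_edge M D i {v, u}" by (rule interior_vertex_edge_is_FF[OF H v uv])
  then obtain c where c: "three_cycle E c" "{v, u} \<subseteq> c" "c \<notin> facial_cycles M D i"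
    using U unfolding uncontractible_def E_def by blast
  obtain y where y: "c = {v, u, y}" "y \<in> neighbours E u \<inter> neighbours E v"
    using three_cycle_through_edge[OF c(1,2) \<open>u \<noteq> v\<close>] .
  have "{v, u} \<in> edges_of M" using uv unfolding thg_edges_def by blast
  hence "card {t \<in> triangles_of M. {v, u} \<subseteq> t} = 2" by (rule torus_edge_in_two_triangles[OF M])
  then obtain T1 T2 where T: "T1 \<noteq> T2" "{t \<in> triangles_of M. {v, u} \<subseteq> t} = {T1, T2}"
    by (meson card_2_iff)
  hence T12: "T1 \<in> triangles_of M" "{v, u} \<subseteq> T1" "T2 \<in> triangles_of M" "{v, u} \<subseteq> T2"
    by blast+
  have facial: "T1 \<in> facial_cycles M D i" "T2 \<in> facial_cycles M D i"
    using triangle_at_interior_vertex_is_facial[OF H v uv] T12 by blast+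
  have "three_cycle E T1" "three_cycle E T2"
    unfolding E_def using facial_cycle_is_three_cycle[OF H] facial by blast+
  obtain x1 where x1: "T1 = {v, u, x1}" "x1 \<in> neighbours E u \<inter> neighbours E v"
    using three_cycle_through_edge[OF \<open>three_cycle E T1\<close> T12(2) \<open>u \<noteq> v\<close>] .
  obtain x2 where x2: "T2 = {v, u, x2}" "x2 \<in> neighbours E u \<inter> neighbours E v"
    using three_cycle_through_edge[OF \<open>three_cycle E T2\<close> T12(4) \<open>u \<noteq> v\<close>] .
  have "x1 \<noteq> x2" using T(1) unfolding x1(1) x2(1) by auto
  moreover have "y \<noteq> x1" "y \<noteq> x2" using c(3) facial unfolding x1(1) x2(1) y(1) by auto
  ultimately have "card {x1, x2, y} = 3" by simp
  moreover have "neighbours E u \<subseteq> thg_vertices M"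
    using thg_edge_is_edge unfolding E_def neighbours_def by blast
  hence "finite (neighbours E u)"
    using torus_triangulation_finite_vertices[OF M] by (rule finite_subset)
  ultimately show ?thesis
    using x1(2) x2(2) y(2) card_mono[of "neighbours E u \<inter> neighbours E v" "{x1, x2, y}"] by simp
qed

theorem lemma5p1:
  fixes M :: "'v set set" and D :: "'w set set" and i :: "'w \<Rightarrow> 'v"
  assumes "in_class_T M D i"
    and "uncontractible M D i"
    and "v \<in> interior_vertices M D i"
  shows "degree (thg_edges M D i) v \<ge> 6"
proof -
  have H: "torus_hole_data M D i" and tight: "tight36 (thg_vertices M) (thg_edges M D i)"
    using assms(1) unfolding in_class_T_def by blast+
  note M = torus_hole_dataD(1)[OF H]
  note fin = torus_triangulation_finite_vertices[OF M]
  have v: "v \<in> thg_vertices M" using assms(3) unfolding interior_vertices_def by blast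
  have edges: "\<And>e. e \<in> thg_edges M D i \<Longrightarrow> card e = 2 \<and> e \<subseteq> thg_vertices M"
    by (rule thg_edge_is_edge)
  have "4 \<le> card (thg_vertices M)" using torus_four_vertices[OF M] v unfolding thg_vertices_def .
  hence "neighbours (thg_edges M D i) v \<noteq> {}"
    using tight36_no_isolated_vertex[OF fin edges tight v] by blast
  thus ?thesis
    using tight36_degree_ge_6_if_link_min_degree_3[OF fin edges tight v]
      uncontractible_link_min_degree_3[OF H assms(2,3)] by blast
qed

end
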